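(* Let $n\geq 2$ and let $G\in\mathcal{G}_{2n}$. Let $M$ be a perfect matching of $G$. Then $f(G,M)=n-1$ if and only if for any two distinct edges $e_i,e_j\in M$, the induced subgraph $G[V(\{e_i,e_j\})]$ contains an $M$-alternating cycle. Consequently, $G$ has a perfect matching $M$ with $f(G,M)=n-1$ if and only if $G$ has a perfect matching $M$ with this property. Moreover, $G$ is minimal if and only if $G$ has a perfect matching $M$ such that for any two distinct edges $e_i,e_j\in M$, $G[V(\{e_i,e_j\})]$ is exactly an $M$-alternating $4$-cycle (i.e. the induced subgraph on these four vertices is a $4$-cycle alternating between $M$ and non-$M$ edges, with no further edges).
   Context: All graphs are finite and simple. $\mathcal{G}_{2n}$ denotes the set of all graphs with $2n$ vertices that have a perfect matching. For an edge set $S$, $V(S)$ is the set of end vertices of edges of $S$; $G[T]$ is the subgraph induced by a vertex set $T$. For a perfect matching $M$ of $G$, a cycle is $M$-alternating if its edges alternate between $M$ and $E(G)\setminus M$. A forcing set of $M$ is a subset $S\subseteq M$ contained in no other perfect matching of $G$; the forcing number $f(G,M)$ is the minimum size of a forcing set of $M$. The maximum forcing number $F(G)$ is the maximum of $f(G,M)$ over all perfect matchings $M$ of $G$ (so $F(G)\le n-1$ for $G\in\mathcal{G}_{2n}$). A graph $G\in\mathcal{G}_{2n}$ with $F(G)=n-1$ is called minimal if for every edge $e$ of $G$, either $G-e$ has no perfect matching or $F(G-e)\leq n-2$ (in fact the paper shows $G-e$ always has a perfect matching, so the condition is $F(G-e)\le n-2$). *)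

theory Defs
  imports Main
begin

definition simple_graph :: "'a set \<Rightarrow> 'a set set \<Rightarrow> bool" where
  "simple_graph V E \<longleftrightarrow> finite V \<and> (\<forall>e\<in>E. e \<subseteq> V \<and> card e = 2)"

definition perfect_matching :: "'a set \<Rightarrow> 'a set set \<Rightarrow> 'a set set \<Rightarrow> bool" where
  "perfect_matching V E M \<longleftrightarrow> M \<subseteq> E \<and> (\<forall>v\<in>V. \<exists>!e. e \<in> M \<and> v \<in> e)"

definition in_G2n :: "nat \<Rightarrow> 'a set \<Rightarrow> 'a set set \<Rightarrow> bool" where
  "in_G2n n V E \<longleftrightarrow> simple_graph V E \<and> card V = 2 * n \<and> (\<exists>M. perfect_matching V E M)"

definition Vs :: "'a set set \<Rightarrow> 'a set" where
  "Vs S = \<Union>S"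

definition induced :: "'a set set \<Rightarrow> 'a set \<Rightarrow> 'a set set" where
  "induced E T = {e \<in> E. e \<subseteq> T}"

definition forcing_set :: "'a set \<Rightarrow> 'a set set \<Rightarrow> 'a set set \<Rightarrow> 'a set set \<Rightarrow> bool" where
  "forcing_set V E M S \<longleftrightarrow> S \<subseteq> M \<and> (\<forall>M'. perfect_matching V E M' \<and> S \<subseteq> M' \<longrightarrow> M' = M)"

definition forcing_number :: "'a set \<Rightarrow> 'a set set \<Rightarrow> 'a set set \<Rightarrow> nat" where
  "forcing_number V E M = Min (card ` {S. forcing_set V E M S})"

definition max_forcing_number :: "'a set \<Rightarrow> 'a set set \<Rightarrow> nat" where
  "max_forcing_number V E = Max (forcing_number V E ` {M. perfect_matching V E M})"

definition cyc_edge :: "'a list \<Rightarrow> nat \<Rightarrow> 'a set" where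
  "cyc_edge cs i = {cs ! i, cs ! (Suc i mod length cs)}"

definition cycle_edges :: "'a list \<Rightarrow> 'a set set" where
  "cycle_edges cs = {cyc_edge cs i | i. i < length cs}"

definition is_cycle :: "'a set set \<Rightarrow> 'a list \<Rightarrow> bool" where
  "is_cycle E cs \<longleftrightarrow> distinct cs \<and> length cs \<ge> 3 \<and> (\<forall>i < length cs. cyc_edge cs i \<in> E)"

definition alt_cycle :: "'a set set \<Rightarrow> 'a set set \<Rightarrow> 'a list \<Rightarrow> bool" where
  "alt_cycle E M cs \<longleftrightarrow> is_cycle E cs \<and> even (length cs) \<and>
     (\<forall>i < length cs. cyc_edge cs i \<in> M \<longleftrightarrow> cyc_edge cs (Suc i mod length cs) \<notin> M)"

definition minimal_graph :: "nat \<Rightarrow> 'a set \<Rightarrow> 'a set set \<Rightarrow> bool" where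
  "minimal_graph n V E \<longleftrightarrow> max_forcing_number V E = n - 1 \<and>
     (\<forall>e\<in>E. \<not> (\<exists>M. perfect_matching V (E - {e}) M) \<or> max_forcing_number V (E - {e}) \<le> n - 2)"

end

theory Submission
  imports Defs
begin

text \<open>
  An \<open>M\<close>-alternating cycle inside the subgraph spanned by two matching edges \<open>e\<^sub>i, e\<^sub>j\<close> is
  necessarily a 4-cycle \<open>abcd\<close> with \<open>{e\<^sub>i, e\<^sub>j} = {ab, cd}\<close>; switching \<open>M\<close> along it gives a
  second perfect matching that agrees with \<open>M\<close> off \<open>e\<^sub>i, e\<^sub>j\<close>. Conversely, a perfect matching
  that agrees with \<open>M\<close> off \<open>e\<^sub>i, e\<^sub>j\<close> but differs from \<open>M\<close> rematches their four ends
  crosswise, which closes such a cycle. So \<open>M - {e\<^sub>i, e\<^sub>j}\<close> forces \<open>M\<close> iff the pair spans no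
  alternating cycle, whereas a set missing two edges of \<open>M\<close> that span one cannot force \<open>M\<close>; since
  \<open>M - {e}\<close> always forces \<open>M\<close>, this gives \<open>f(G,M) = n - 1\<close> iff every pair spans an alternating
  cycle.

  Minimality is a counting argument: every edge outside \<open>M\<close> lies in the subgraph spanned by exactly
  one pair of matching edges, so the pair property forces at least \<open>n + 2 (n choose 2) = n\<^sup>2\<close>
  edges, with equality when each pair spans exactly an alternating 4-cycle. Then deleting any edge
  leaves too few edges for any perfect matching to keep the pair property. Conversely, in a minimal
  graph an edge of such a subgraph off the alternating cycle could be deleted without destroying the
  pair property of \<open>M\<close>, so \<open>F\<close> would not drop.
\<close>

section \<open>Perfect matchings\<close>

lemma simple_graph_finite_edges: "simple_graph V E \<Longrightarrow> finite E"
  unfolding simple_graph_def by (meson Pow_iff finite_Pow_iff rev_finite_subset subsetI)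

lemma simple_graph_Diff: "simple_graph V E \<Longrightarrow> simple_graph V (E - F)"
  by (simp add: simple_graph_def)

lemma perfect_matching_Diff_edge_iff:
  "perfect_matching V (E - {g}) M \<longleftrightarrow> perfect_matching V E M \<and> g \<notin> M"
  by (auto simp: perfect_matching_def)

lemma perfect_matching_edge:
  assumes "simple_graph V E" and "perfect_matching V E M" and "g \<in> M"
  shows "g \<in> E" and "g \<subseteq> V" and "card g = 2" and "finite g"
proof -
  show "g \<in> E" "g \<subseteq> V" "card g = 2" using assms by (auto simp: perfect_matching_def simple_graph_def)
  then show "finite g" by (simp add: card_ge_0_finite)
qed

lemma perfect_matching_finite:
  "simple_graph V E \<Longrightarrow> perfect_matching V E M \<Longrightarrow> finite M"
  by (meson perfect_matching_def rev_finite_subset simple_graph_finite_edges)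

lemma perfect_matching_cover:
  assumes "perfect_matching V E M" and "x \<in> V"
  obtains g where "g \<in> M" and "x \<in> g"
  using assms by (auto simp: perfect_matching_def)

lemma perfect_matching_unique:
  assumes sg: "simple_graph V E" and pm: "perfect_matching V E M"
    and "g \<in> M" "h \<in> M" "x \<in> g" "x \<in> h"
  shows "g = h"
proof -
  have "x \<in> V" using perfect_matching_edge(2)[OF sg pm \<open>g \<in> M\<close>] \<open>x \<in> g\<close> by blast
  then show ?thesis using pm assms(3-) by (auto simp: perfect_matching_def)
qed

lemma perfect_matching_partner:
  assumes sg: "simple_graph V E" and pm: "perfect_matching V E M" and "x \<in> V"
  obtains y where "y \<noteq> x" and "{x, y} \<in> M"
proof -
  obtain g where "g \<in> M" "x \<in> g" using perfect_matching_cover[OF pm \<open>x \<in> V\<close>] .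
  moreover have "card g = 2" using perfect_matching_edge(3)[OF sg pm \<open>g \<in> M\<close>] .
  ultimately obtain y where "g = {x, y}" "y \<noteq> x" by (metis card_2_iff insert_commute insertE singletonD)
  then show ?thesis using that \<open>g \<in> M\<close> by blast
qed

lemma perfect_matching_partner_unique:
  assumes sg: "simple_graph V E" and pm: "perfect_matching V E M"
    and "{x, y} \<in> M" and "{x, z} \<in> M"
  shows "y = z"
proof -
  have "{x, y} = {x, z}" using perfect_matching_unique[OF sg pm assms(3,4)] by blast
  moreover have "y \<noteq> x" using perfect_matching_edge(3)[OF sg pm assms(3)] by (auto simp: card_2_iff)
  ultimately show ?thesis by (auto simp: doubleton_eq_iff)
qed

lemma card_perfect_matching:
  assumes sg: "simple_graph V E" and pm: "perfect_matching V E M"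
  shows "card V = 2 * card M"
proof -
  have "V = \<Union>M" using perfect_matching_edge(2)[OF sg pm] pm by (auto simp: perfect_matching_def)
  moreover have "pairwise disjnt M"
    using perfect_matching_unique[OF sg pm] by (auto simp: pairwise_def disjnt_def)
  then have "card (\<Union>M) = (\<Sum>g\<in>M. card g)"
    using perfect_matching_edge(4)[OF sg pm] by (intro card_Union_disjoint) auto
  ultimately show ?thesis using perfect_matching_edge(3)[OF sg pm] by simp
qed

lemma perfect_matching_subset_eq:
  assumes sg: "simple_graph V E" and pm: "perfect_matching V E M"
    and pm': "perfect_matching V E M'" and "M \<subseteq> M'"
  shows "M' = M"
proof (intro equalityI subsetI)
  fix g assume "g \<in> M'"
  then obtain x where "x \<in> g" using perfect_matching_edge(3)[OF sg pm'] by (auto simp: card_2_iff)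
  then obtain h where "h \<in> M" "x \<in> h"
    using perfect_matching_cover[OF pm] perfect_matching_edge(2)[OF sg pm' \<open>g \<in> M'\<close>] by blast
  then show "g \<in> M"
    using perfect_matching_unique[OF sg pm'] \<open>g \<in> M'\<close> \<open>x \<in> g\<close> \<open>M \<subseteq> M'\<close> by blast
qed (use assms in blast)

lemma perfect_matching_closed:
  assumes sg: "simple_graph V E" and pm: "perfect_matching V E M"
    and pm': "perfect_matching V E M'" and "X \<subseteq> M" and "M - X \<subseteq> M'"
    and "g \<in> M'" and "x \<in> g" and "x \<in> \<Union>X"
  shows "g \<subseteq> \<Union>X"
proof
  fix y assume "y \<in> g"
  obtain h where h: "h \<in> M" "y \<in> h"
    using perfect_matching_cover[OF pm] perfect_matching_edge(2)[OF sg pm' \<open>g \<in> M'\<close>] \<open>y \<in> g\<close> by blast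
  show "y \<in> \<Union>X"
  proof (rule ccontr)
    assume "y \<notin> \<Union>X"
    then have "h \<in> M'" using h \<open>M - X \<subseteq> M'\<close> by blast
    then have "h = g" using perfect_matching_unique[OF sg pm'] h(2) \<open>g \<in> M'\<close> \<open>y \<in> g\<close> by blast
    then show False
      using perfect_matching_unique[OF sg pm] h \<open>x \<in> g\<close> \<open>x \<in> \<Union>X\<close> \<open>X \<subseteq> M\<close> \<open>y \<notin> \<Union>X\<close> by blast
  qed
qed

lemma Vs_doubleton: "Vs {a, b} = a \<union> b"
  by (simp add: Vs_def)

lemma matching_edge_in_pair:
  assumes sg: "simple_graph V E" and pm: "perfect_matching V E M"
    and "e \<in> M" and "ek \<in> M" and "el \<in> M" and "x \<in> e" and "x \<in> Vs {ek, el}"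
  shows "e \<in> {ek, el}"
  using perfect_matching_unique[OF sg pm] assms(3-) by (auto simp: Vs_doubleton)

lemma card_2_subsetE:
  assumes "P \<subseteq> M" and "card P = 2"
  obtains x y where "P = {x, y}" and "x \<in> M" and "y \<in> M" and "x \<noteq> y"
  using assms by (auto simp: card_2_iff)

section \<open>Alternating cycles spanned by two matching edges\<close>

lemma all_less_four: "(\<forall>i<(4::nat). P i) \<longleftrightarrow> P 0 \<and> P 1 \<and> P 2 \<and> P 3"
  by (auto simp: eval_nat_numeral less_Suc_eq)

lemma alt_cycle_square_iff:
  "alt_cycle F M [a, b, c, d] \<longleftrightarrow> distinct [a, b, c, d]
     \<and> {a, b} \<in> F \<and> {b, c} \<in> F \<and> {c, d} \<in> F \<and> {d, a} \<in> F
     \<and> ({a, b} \<in> M \<longleftrightarrow> {b, c} \<notin> M) \<and> ({b, c} \<in> M \<longleftrightarrow> {c, d} \<notin> M)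
     \<and> ({c, d} \<in> M \<longleftrightarrow> {d, a} \<notin> M) \<and> ({d, a} \<in> M \<longleftrightarrow> {a, b} \<notin> M)"
proof -
  have four: "length [a, b, c, d] = 4" by simp
  show ?thesis
    unfolding alt_cycle_def is_cycle_def four all_less_four by (simp add: cyc_edge_def insert_commute)
qed

lemma alt_cycle_square_rotate:
  assumes "alt_cycle F M [a, b, c, d]" shows "alt_cycle F M [b, c, d, a]"
proof -
  have "distinct [b, c, d, a] \<longleftrightarrow> distinct [a, b, c, d]" by auto
  then show ?thesis using assms unfolding alt_cycle_square_iff by argo
qed

lemma cycle_edges_square: "cycle_edges [a, b, c, d] = {{a, b}, {b, c}, {c, d}, {d, a}}"
proof -
  have "cycle_edges [a, b, c, d] = cyc_edge [a, b, c, d] ` {0, 1, 2, 3}"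
    unfolding cycle_edges_def by (auto simp: eval_nat_numeral less_Suc_eq)
  then show ?thesis by (simp add: cyc_edge_def)
qed

lemma alt_cycle_edges_subset: "alt_cycle F M cs \<Longrightarrow> cycle_edges cs \<subseteq> F"
  by (auto simp: alt_cycle_def is_cycle_def cycle_edges_def)

lemma alt_cycle_mono: "alt_cycle F M cs \<Longrightarrow> cycle_edges cs \<subseteq> F' \<Longrightarrow> alt_cycle F' M cs"
  by (auto simp: alt_cycle_def is_cycle_def cycle_edges_def)

lemma card_Vs_matching_pair:
  assumes sg: "simple_graph V E" and pm: "perfect_matching V E M"
    and "ei \<in> M" and "ej \<in> M" and "ei \<noteq> ej"
  shows "card (Vs {ei, ej}) = 4"
proof -
  have "ei \<inter> ej = {}" using perfect_matching_unique[OF sg pm] assms(3-) by blast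
  then show ?thesis
    using perfect_matching_edge(3,4)[OF sg pm] assms(3,4) by (simp add: Vs_doubleton card_Un_disjoint)
qed

lemma alt_cycle_in_matching_pair_length:
  assumes sg: "simple_graph V E" and pm: "perfect_matching V E M"
    and "ei \<in> M" and "ej \<in> M" and "ei \<noteq> ej"
    and ac: "alt_cycle (induced E (Vs {ei, ej})) M cs"
  shows "length cs = 4" and "set cs = Vs {ei, ej}"
proof -
  have "set cs \<subseteq> Vs {ei, ej}"
  proof
    fix x assume "x \<in> set cs"
    then obtain i where "i < length cs" "x \<in> cyc_edge cs i" by (auto simp: in_set_conv_nth cyc_edge_def)
    then show "x \<in> Vs {ei, ej}"
      using alt_cycle_edges_subset[OF ac] by (auto simp: cycle_edges_def induced_def)
  qed
  moreover have "distinct cs" "3 \<le> length cs" "even (length cs)"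
    using ac by (auto simp: alt_cycle_def is_cycle_def)
  moreover have fin: "finite (Vs {ei, ej})" and card4: "card (Vs {ei, ej}) = 4"
    using card_Vs_matching_pair[OF assms(1-5)] by (auto intro: card_ge_0_finite)
  ultimately have "length cs \<le> 4" using card_mono distinct_card by metis
  with \<open>3 \<le> length cs\<close> \<open>even (length cs)\<close> show "length cs = 4" by presburger
  then show "set cs = Vs {ei, ej}"
    using card_subset_eq[OF fin \<open>set cs \<subseteq> Vs {ei, ej}\<close>] distinct_card[OF \<open>distinct cs\<close>] card4 by simp
qed

lemma alt_square_in_matching_pair:
  assumes sg: "simple_graph V E" and pm: "perfect_matching V E M"
    and "ei \<in> M" and "ej \<in> M"
    and ac: "alt_cycle (induced E (Vs {ei, ej})) M [a, b, c, d]"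
    and "{a, b} \<in> M" and T: "{a, b, c, d} = Vs {ei, ej}"
  shows "{ei, ej} = {{a, b}, {c, d}}" and "{b, c} \<in> E - M" and "{d, a} \<in> E - M"
proof -
  have dist: "distinct [a, b, c, d]" and "{b, c} \<in> induced E (Vs {ei, ej})" "{d, a} \<in> induced E (Vs {ei, ej})"
    and "{c, d} \<in> M" "{b, c} \<notin> M" "{d, a} \<notin> M"
    using ac \<open>{a, b} \<in> M\<close> unfolding alt_cycle_square_iff by blast+
  then show "{b, c} \<in> E - M" "{d, a} \<in> E - M" by (auto simp: induced_def)
  note in_pair = matching_edge_in_pair[OF sg pm _ \<open>ei \<in> M\<close> \<open>ej \<in> M\<close>]
  have "{a, b} \<in> {ei, ej}" "{c, d} \<in> {ei, ej}"
    using in_pair[OF \<open>{a, b} \<in> M\<close>, of a] in_pair[OF \<open>{c, d} \<in> M\<close>, of c] T by auto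
  moreover have "{a, b} \<noteq> {c, d}" using dist by (auto simp: doubleton_eq_iff)
  ultimately show "{ei, ej} = {{a, b}, {c, d}}" by blast
qed

lemma alt_cycle_in_matching_pair:
  assumes sg: "simple_graph V E" and pm: "perfect_matching V E M"
    and "ei \<in> M" and "ej \<in> M" and "ei \<noteq> ej"
    and ac: "alt_cycle (induced E (Vs {ei, ej})) M cs"
  obtains p q r s where "distinct [p, q, r, s]" and "{ei, ej} = {{p, q}, {r, s}}"
    and "{q, r} \<in> E - M" and "{s, p} \<in> E - M"
    and "cycle_edges cs = {{p, q}, {q, r}, {r, s}, {s, p}}"
proof -
  obtain a b c d where cs: "cs = [a, b, c, d]"
    using alt_cycle_in_matching_pair_length(1)[OF assms]
    by (auto simp: numeral_eq_Suc length_Suc_conv)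
  have T: "{a, b, c, d} = Vs {ei, ej}" using alt_cycle_in_matching_pair_length(2)[OF assms] cs by simp
  note square = alt_square_in_matching_pair[OF sg pm \<open>ei \<in> M\<close> \<open>ej \<in> M\<close>]
  have dist: "distinct [a, b, c, d]" and alt: "{a, b} \<in> M \<or> {b, c} \<in> M"
    using ac unfolding cs alt_cycle_square_iff by blast+
  show ?thesis
  proof (cases "{a, b} \<in> M")
    case True
    note square_abcd = square[OF ac[unfolded cs] True T]
    show ?thesis
      by (rule that[OF dist square_abcd]) (simp add: cs cycle_edges_square)
  next
    case False
    then have bc: "{b, c} \<in> M" using alt by blast
    have T': "{b, c, d, a} = Vs {ei, ej}" using T by auto
    note square_bcda = square[OF alt_cycle_square_rotate[OF ac[unfolded cs]] bc T']
    show ?thesis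
    proof (rule that[OF _ square_bcda])
      show "distinct [b, c, d, a]" using dist by auto
      show "cycle_edges cs = {{b, c}, {c, d}, {d, a}, {a, b}}" by (simp add: cs cycle_edges_square insert_commute)
    qed
  qed
qed

lemma alt_cycle_square_intro:
  assumes sg: "simple_graph V E" and pm: "perfect_matching V E M"
    and "distinct [a, b, c, d]" and "{a, b} \<in> M" and "{c, d} \<in> M"
    and "{b, c} \<in> E" and "{d, a} \<in> E"
  shows "alt_cycle (induced E {a, b, c, d}) M [a, b, c, d]"
proof -
  have "{b, c} \<notin> M" using perfect_matching_partner_unique[OF sg pm, of b a c] assms(3,4)
    by (auto simp: insert_commute)
  moreover have "{d, a} \<notin> M" using perfect_matching_partner_unique[OF sg pm, of d c a] assms(3,5)
    by (auto simp: insert_commute)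
  moreover have "{a, b} \<in> E" "{c, d} \<in> E" using pm assms(4,5) by (auto simp: perfect_matching_def)
  ultimately show ?thesis using assms(3-) by (simp add: alt_cycle_square_iff induced_def)
qed

lemma perfect_matching_swap_square:
  assumes sg: "simple_graph V E" and pm: "perfect_matching V E M"
    and dist: "distinct [p, q, r, s]" and "{p, q} \<in> M" and "{r, s} \<in> M"
    and "{q, r} \<in> E" and "{s, p} \<in> E"
  shows "perfect_matching V E (M - {{p, q}, {r, s}} \<union> {{q, r}, {s, p}})"
    (is "perfect_matching V E ?M")
proof -
  have old: "g = {p, q} \<or> g = {r, s}" if "g \<in> M" "x \<in> g" "x \<in> {p, q, r, s}" for g x
    using perfect_matching_unique[OF sg pm] that \<open>{p, q} \<in> M\<close> \<open>{r, s} \<in> M\<close> by blast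
  have "\<exists>!g. g \<in> ?M \<and> v \<in> g" if "v \<in> V" for v
  proof (cases "v \<in> {p, q, r, s}")
    case True
    have new: "h \<in> {{q, r}, {s, p}}" if "h \<in> ?M" "v \<in> h" for h
    proof (rule ccontr)
      assume "h \<notin> {{q, r}, {s, p}}"
      then have "h \<in> M" "h \<notin> {{p, q}, {r, s}}" using that(1) by auto
      then show False using old[OF _ that(2) True] by blast
    qed
    have unique: "\<exists>!g. g \<in> ?M \<and> v \<in> g"
      if pair: "{e, e'} = {{q, r}, {s, p}}" and "v \<in> e" and "v \<notin> e'" for e e'
    proof (rule ex1I[of _ e])
      have "e \<in> {{q, r}, {s, p}}" unfolding pair[symmetric] by simp
      then show "e \<in> ?M \<and> v \<in> e" using \<open>v \<in> e\<close> by blast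
    next
      fix h assume h: "h \<in> ?M \<and> v \<in> h"
      then have "h \<in> {e, e'}" unfolding pair using new by blast
      then show "h = e" using h \<open>v \<notin> e'\<close> by blast
    qed
    from True consider "v \<in> {q, r}" "v \<notin> {s, p}" | "v \<in> {s, p}" "v \<notin> {q, r}"
      using dist by auto
    then show ?thesis
    proof cases
      case 1
      then show ?thesis by (intro unique[of "{q, r}" "{s, p}"]) simp_all
    next
      case 2
      then show ?thesis by (intro unique[of "{s, p}" "{q, r}"]) (simp_all add: insert_commute)
    qed
  next
    case False
    obtain g where g: "g \<in> M" "v \<in> g" using perfect_matching_cover[OF pm \<open>v \<in> V\<close>] .
    show ?thesis
    proof (rule ex1I[of _ g])
      show "g \<in> ?M \<and> v \<in> g" using g False by auto
    next
      fix h assume h: "h \<in> ?M \<and> v \<in> h"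
      then have "h \<in> M" using False by auto
      then show "h = g" using perfect_matching_unique[OF sg pm, of h g v] g h by blast
    qed
  qed
  moreover have "?M \<subseteq> E" using pm assms(6,7) by (auto simp: perfect_matching_def)
  ultimately show ?thesis by (simp add: perfect_matching_def)
qed

lemma perfect_matching_other_pair:
  assumes sg: "simple_graph V E" and pm: "perfect_matching V E M"
    and "T = {w, x, y, z}" and "T \<subseteq> V" and "distinct [w, x, y, z]" and "{w, x} \<in> M"
    and closed: "\<And>v u. v \<in> T \<Longrightarrow> {v, u} \<in> M \<Longrightarrow> u \<in> T"
  shows "{y, z} \<in> M"
proof -
  obtain u where u: "u \<noteq> y" "{y, u} \<in> M" using perfect_matching_partner[OF sg pm, of y] assms(3,4) by blast
  have "u \<noteq> w" using perfect_matching_partner_unique[OF sg pm, of w x y] u \<open>{w, x} \<in> M\<close> assms(5)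
    by (auto simp: insert_commute)
  moreover have "u \<noteq> x" using perfect_matching_partner_unique[OF sg pm, of x w y] u \<open>{w, x} \<in> M\<close> assms(5)
    by (auto simp: insert_commute)
  ultimately show ?thesis using closed[OF _ u(2)] u assms(3) by auto
qed

lemma alt_cycle_if_rematched_pair:
  assumes sg: "simple_graph V E" and pm: "perfect_matching V E M"
    and pm': "perfect_matching V E M'" and "ei \<in> M" and "ej \<in> M" and "ei \<noteq> ej"
    and agree: "M - {ei, ej} \<subseteq> M'" and "M' \<noteq> M"
  shows "\<exists>cs. alt_cycle (induced E (Vs {ei, ej})) M cs"
proof -
  obtain a b where ei: "ei = {a, b}" using perfect_matching_edge(3)[OF sg pm \<open>ei \<in> M\<close>] by (auto simp: card_2_iff)
  obtain c d where ej: "ej = {c, d}" using perfect_matching_edge(3)[OF sg pm \<open>ej \<in> M\<close>] by (auto simp: card_2_iff)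
  have T: "Vs {ei, ej} = {a, b, c, d}" by (auto simp: Vs_doubleton ei ej)
  have dist: "distinct [a, b, c, d]"
    using card_Vs_matching_pair[OF sg pm assms(4-6)] unfolding T by (auto simp: card_insert_if split: if_splits)
  have TV: "{a, b, c, d} \<subseteq> V" using perfect_matching_edge(2)[OF sg pm] assms(4,5) ei ej by auto
  have closed: "u \<in> {a, b, c, d}" if "v \<in> {a, b, c, d}" and "{v, u} \<in> M'" for v u
  proof -
    have "{v, u} \<subseteq> \<Union>{ei, ej}"
      by (rule perfect_matching_closed[OF sg pm pm' _ agree that(2), where x = v])
        (use that(1) assms(4,5) T in \<open>auto simp: Vs_def\<close>)
    then show ?thesis using T unfolding Vs_def by blast
  qed
  note partition = perfect_matching_other_pair[OF sg pm' _ TV _ _ closed]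
  obtain y where y: "y \<noteq> a" "{a, y} \<in> M'" using perfect_matching_partner[OF sg pm', of a] TV by blast
  then consider "y = b" | "y = c" | "y = d" using closed[of a y] by auto
  then show ?thesis
  proof cases
    case 1
    then have "ei \<in> M'" "ej \<in> M'" using partition[of a b c d] dist y ei ej by auto
    then show ?thesis using agree perfect_matching_subset_eq[OF sg pm pm'] \<open>M' \<noteq> M\<close> by blast
  next
    case 2
    then have "{b, d} \<in> M'" using partition[of a c b d] dist y by (auto simp: insert_commute)
    then have "alt_cycle (induced E {a, b, d, c}) M [a, b, d, c]"
      using alt_cycle_square_intro[OF sg pm, of a b d c] dist y 2 assms(4,5) ei ej
        perfect_matching_edge(1)[OF sg pm'] by (auto simp: insert_commute)
    then show ?thesis using T by (metis insert_commute)
  next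
    case 3
    then have "{b, c} \<in> M'" using partition[of a d b c] dist y by (auto simp: insert_commute)
    then have "alt_cycle (induced E {a, b, c, d}) M [a, b, c, d]"
      using alt_cycle_square_intro[OF sg pm, of a b c d] dist y 3 assms(4,5) ei ej
        perfect_matching_edge(1)[OF sg pm'] by (auto simp: insert_commute)
    then show ?thesis using T by metis
  qed
qed

lemma forcing_set_self:
  "simple_graph V E \<Longrightarrow> perfect_matching V E M \<Longrightarrow> forcing_set V E M M"
  using perfect_matching_subset_eq by (fastforce simp: forcing_set_def)

section \<open>Forcing number\<close>

lemma finite_forcing_sets:
  "simple_graph V E \<Longrightarrow> perfect_matching V E M \<Longrightarrow> finite {S. forcing_set V E M S}"
  using perfect_matching_finite by (auto simp: forcing_set_def intro: finite_subset[of _ "Pow M"])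

lemma forcing_number_le:
  assumes sg: "simple_graph V E" and pm: "perfect_matching V E M" and "forcing_set V E M S"
  shows "forcing_number V E M \<le> card S"
  unfolding forcing_number_def using finite_forcing_sets[OF sg pm] assms(3) by (intro Min_le) auto

lemma forcing_number_attained:
  assumes sg: "simple_graph V E" and pm: "perfect_matching V E M"
  obtains S where "forcing_set V E M S" and "card S = forcing_number V E M"
proof -
  have "forcing_number V E M \<in> card ` {S. forcing_set V E M S}"
    unfolding forcing_number_def using finite_forcing_sets[OF sg pm] forcing_set_self[OF sg pm]
    by (intro Min_in) auto
  then show ?thesis using that by auto
qed

lemma forcing_set_Diff_edge:
  assumes sg: "simple_graph V E" and pm: "perfect_matching V E M" and "e \<in> M"
  shows "forcing_set V E M (M - {e})"
  unfolding forcing_set_def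
proof (intro conjI allI impI)
  fix M' assume "perfect_matching V E M' \<and> M - {e} \<subseteq> M'"
  then have pm': "perfect_matching V E M'" and sub: "M - {e} \<subseteq> M'" by auto
  obtain x where "x \<in> e" using perfect_matching_edge(3)[OF sg pm \<open>e \<in> M\<close>] by (auto simp: card_2_iff)
  then have "x \<in> V" using perfect_matching_edge(2)[OF sg pm \<open>e \<in> M\<close>] by blast
  then obtain g where g: "g \<in> M'" "x \<in> g" using perfect_matching_cover[OF pm'] by blast
  have "g \<subseteq> \<Union>{e}"
    by (rule perfect_matching_closed[OF sg pm pm' _ _ g]) (use \<open>e \<in> M\<close> sub \<open>x \<in> e\<close> in auto)
  then have "g \<subseteq> e" by simp
  then have "g = e"
    using card_subset_eq perfect_matching_edge(3,4)[OF sg pm \<open>e \<in> M\<close>] perfect_matching_edge(3)[OF sg pm' \<open>g \<in> M'\<close>]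
    by metis
  then show "M' = M" using perfect_matching_subset_eq[OF sg pm pm'] sub g(1) by blast
qed auto

lemma forcing_number_le_card_minus_one:
  assumes sg: "simple_graph V E" and pm: "perfect_matching V E M"
  shows "forcing_number V E M \<le> card M - 1"
proof (cases "M = {}")
  case True
  then show ?thesis using forcing_number_le[OF sg pm forcing_set_self[OF sg pm]] by simp
next
  case False
  then obtain e where "e \<in> M" by blast
  then show ?thesis
    using forcing_number_le[OF sg pm forcing_set_Diff_edge[OF sg pm]] perfect_matching_finite[OF sg pm] by simp
qed

definition pairwise_alternating :: "'a set set \<Rightarrow> 'a set set \<Rightarrow> bool" where
  "pairwise_alternating E M \<longleftrightarrow>
     (\<forall>ei\<in>M. \<forall>ej\<in>M. ei \<noteq> ej \<longrightarrow> (\<exists>cs. alt_cycle (induced E (Vs {ei, ej})) M cs))"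

lemma forcing_set_Diff_pair:
  assumes sg: "simple_graph V E" and pm: "perfect_matching V E M"
    and "ei \<in> M" and "ej \<in> M" and "ei \<noteq> ej"
    and "\<nexists>cs. alt_cycle (induced E (Vs {ei, ej})) M cs"
  shows "forcing_set V E M (M - {ei, ej})"
  using alt_cycle_if_rematched_pair[OF sg pm _ assms(3-5)] assms(6) by (auto simp: forcing_set_def)

lemma pairwise_alternating_forcing_set_card:
  assumes sg: "simple_graph V E" and pm: "perfect_matching V E M"
    and alt: "pairwise_alternating E M" and forcing: "forcing_set V E M S"
  shows "card M - 1 \<le> card S"
proof (rule ccontr)
  assume "\<not> card M - 1 \<le> card S"
  moreover have "S \<subseteq> M" using forcing by (simp add: forcing_set_def)
  ultimately have "2 \<le> card (M - S)"
    using perfect_matching_finite[OF sg pm] by (simp add: card_Diff_subset finite_subset)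
  then obtain P where "P \<subseteq> M - S" "card P = 2" by (rule obtain_subset_with_card_n)
  then obtain ei ej where "ei \<in> M - S" "ej \<in> M - S" "ei \<noteq> ej" by (auto simp: card_2_iff)
  then have "ei \<in> M" "ej \<in> M" by auto
  then obtain cs where "alt_cycle (induced E (Vs {ei, ej})) M cs"
    using alt \<open>ei \<noteq> ej\<close> unfolding pairwise_alternating_def by blast
  then obtain p q r s where square: "distinct [p, q, r, s]" "{ei, ej} = {{p, q}, {r, s}}"
    "{q, r} \<in> E - M" "{s, p} \<in> E - M" "cycle_edges cs = {{p, q}, {q, r}, {r, s}, {s, p}}"
    by (rule alt_cycle_in_matching_pair[OF sg pm \<open>ei \<in> M\<close> \<open>ej \<in> M\<close> \<open>ei \<noteq> ej\<close>])
  have swapped: "{p, q} \<in> {ei, ej}" "{r, s} \<in> {ei, ej}" unfolding square(2) by simp_all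
  let ?M = "M - {{p, q}, {r, s}} \<union> {{q, r}, {s, p}}"
  have "{p, q} \<in> M" "{r, s} \<in> M" using swapped \<open>ei \<in> M\<close> \<open>ej \<in> M\<close> by auto
  then have pm_swap: "perfect_matching V E ?M"
    using perfect_matching_swap_square[OF sg pm square(1)] square(3,4) by blast
  have "{p, q} \<notin> S" "{r, s} \<notin> S" using swapped \<open>ei \<in> M - S\<close> \<open>ej \<in> M - S\<close> by auto
  then have "S \<subseteq> ?M" using \<open>S \<subseteq> M\<close> by blast
  then have "?M = M" using forcing pm_swap unfolding forcing_set_def by blast
  then show False using square(3) by blast
qed

lemma forcing_number_eq_iff_pairwise_alternating:
  assumes sg: "simple_graph V E" and pm: "perfect_matching V E M"
  shows "forcing_number V E M = card M - 1 \<longleftrightarrow> pairwise_alternating E M"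
proof
  assume "pairwise_alternating E M"
  then show "forcing_number V E M = card M - 1"
    using forcing_number_attained[OF sg pm] pairwise_alternating_forcing_set_card[OF sg pm]
      forcing_number_le_card_minus_one[OF sg pm] by (metis le_antisym)
next
  assume fn: "forcing_number V E M = card M - 1"
  show "pairwise_alternating E M"
    unfolding pairwise_alternating_def
  proof (intro ballI impI; rule ccontr)
    fix ei ej assume "ei \<in> M" "ej \<in> M" "ei \<noteq> ej"
      and "\<nexists>cs. alt_cycle (induced E (Vs {ei, ej})) M cs"
    then have "forcing_number V E M \<le> card (M - {ei, ej})"
      using forcing_number_le[OF sg pm forcing_set_Diff_pair[OF sg pm]] by blast
    moreover have "card {ei, ej} = 2" "{ei, ej} \<subseteq> M" using \<open>ei \<in> M\<close> \<open>ej \<in> M\<close> \<open>ei \<noteq> ej\<close> by auto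
    moreover have "finite M" using perfect_matching_finite[OF sg pm] .
    ultimately show False using fn card_mono[of M "{ei, ej}"] by (simp add: card_Diff_subset)
  qed
qed

section \<open>Counting edges\<close>

lemma nonmatching_edge_meets:
  assumes sg: "simple_graph V E" and pm: "perfect_matching V E M"
    and "g \<in> E - M" and "ei \<in> M" and "ej \<in> M" and "g \<subseteq> Vs {ei, ej}"
  shows "g \<inter> ei \<noteq> {}"
proof
  assume "g \<inter> ei = {}"
  then have "g \<subseteq> ej" using \<open>g \<subseteq> Vs {ei, ej}\<close> by (auto simp: Vs_doubleton)
  moreover have "card g = 2" using sg \<open>g \<in> E - M\<close> by (simp add: simple_graph_def)
  ultimately have "g = ej" using card_subset_eq perfect_matching_edge(3,4)[OF sg pm \<open>ej \<in> M\<close>] by metis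
  then show False using \<open>g \<in> E - M\<close> \<open>ej \<in> M\<close> by simp
qed

lemma nonmatching_edge_matching_pair_unique:
  assumes sg: "simple_graph V E" and pm: "perfect_matching V E M" and "g \<in> E - M"
    and "ei \<in> M" "ej \<in> M" "ek \<in> M" "el \<in> M"
    and "g \<subseteq> Vs {ei, ej}" and "g \<subseteq> Vs {ek, el}"
  shows "{ei, ej} = {ek, el}"
proof -
  have "{ei, ej} \<subseteq> {ek, el}" if "ei \<in> M" "ej \<in> M" "ek \<in> M" "el \<in> M"
    and "g \<subseteq> Vs {ei, ej}" and "g \<subseteq> Vs {ek, el}" for ei ej ek el
  proof -
    have "g \<inter> ei \<noteq> {}" "g \<inter> ej \<noteq> {}"
      using nonmatching_edge_meets[OF sg pm \<open>g \<in> E - M\<close>] that by (metis insert_commute)+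
    then show ?thesis
      using matching_edge_in_pair[OF sg pm _ \<open>ek \<in> M\<close> \<open>el \<in> M\<close>] that by blast
  qed
  then show ?thesis using assms(4-) by blast
qed

lemma nonmatching_edge_in_matching_pair:
  assumes sg: "simple_graph V E" and pm: "perfect_matching V E M" and "g \<in> E - M"
  obtains ei ej where "ei \<in> M" and "ej \<in> M" and "ei \<noteq> ej" and "g \<subseteq> Vs {ei, ej}"
proof -
  obtain x y where g: "g = {x, y}" "g \<subseteq> V"
    using sg \<open>g \<in> E - M\<close> by (auto simp: simple_graph_def card_2_iff)
  obtain ei ej where "ei \<in> M" "x \<in> ei" "ej \<in> M" "y \<in> ej"
    using perfect_matching_cover[OF pm] g by (metis insert_subset)
  moreover have "ei \<noteq> ej"
  proof
    assume "ei = ej"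
    then have "g \<subseteq> ei" using calculation g(1) by blast
    then have "g = ei"
      using card_subset_eq perfect_matching_edge(3,4)[OF sg pm \<open>ei \<in> M\<close>] sg \<open>g \<in> E - M\<close>
      by (metis DiffD1 simple_graph_def)
    then show False using \<open>g \<in> E - M\<close> \<open>ei \<in> M\<close> by blast
  qed
  ultimately show ?thesis using that g(1) by (auto simp: Vs_doubleton)
qed

lemma card_nonmatching_edges:
  assumes sg: "simple_graph V E" and pm: "perfect_matching V E M"
  shows "card (E - M) = (\<Sum>P\<in>{P. P \<subseteq> M \<and> card P = 2}. card (induced E (Vs P) - M))"
proof -
  let ?pairs = "{P. P \<subseteq> M \<and> card P = 2}"
  have finite: "finite ?pairs" using perfect_matching_finite[OF sg pm] by simp
  have partition: "E - M = (\<Union>P\<in>?pairs. induced E (Vs P) - M)"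
  proof
    show "E - M \<subseteq> (\<Union>P\<in>?pairs. induced E (Vs P) - M)"
    proof
      fix g assume "g \<in> E - M"
      then obtain ei ej where "ei \<in> M" "ej \<in> M" "ei \<noteq> ej" "g \<subseteq> Vs {ei, ej}"
        by (rule nonmatching_edge_in_matching_pair[OF sg pm])
      then show "g \<in> (\<Union>P\<in>?pairs. induced E (Vs P) - M)"
        using \<open>g \<in> E - M\<close> by (intro UN_I[of "{ei, ej}"]) (auto simp: induced_def)
    qed
  qed (auto simp: induced_def)
  have disjoint: "(induced E (Vs P) - M) \<inter> (induced E (Vs Q) - M) = {}"
    if PQ: "P \<in> ?pairs" "Q \<in> ?pairs" "P \<noteq> Q" for P Q
  proof (rule equals0I)
    fix g assume g: "g \<in> (induced E (Vs P) - M) \<inter> (induced E (Vs Q) - M)"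
    have "P \<subseteq> M" "card P = 2" "Q \<subseteq> M" "card Q = 2" using PQ by auto
    then obtain ei ej ek el where "P = {ei, ej}" "Q = {ek, el}" "ei \<in> M" "ej \<in> M" "ek \<in> M" "el \<in> M"
      by (metis card_2_subsetE)
    moreover have "g \<in> E - M" "g \<subseteq> Vs P" "g \<subseteq> Vs Q" using g by (auto simp: induced_def)
    ultimately have "P = Q" using nonmatching_edge_matching_pair_unique[OF sg pm] by metis
    then show False using \<open>P \<noteq> Q\<close> by contradiction
  qed
  have "finite (induced E (Vs P) - M)" for P
    using simple_graph_finite_edges[OF sg] by (simp add: induced_def)
  then show ?thesis unfolding partition using finite disjoint by (intro card_UN_disjoint) auto
qed

lemma card_matching_pairs:
  assumes "finite M"
  shows "2 * card {P. P \<subseteq> M \<and> card P = 2} = card M * (card M - 1)"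
proof -
  have "2 * (card M choose 2) = card M * (card M - 1)"
    by (simp add: choose_two) (cases "card M", auto)
  then show ?thesis using n_subsets[OF assms, of 2] by simp
qed

lemma card_edges_eq:
  assumes sg: "simple_graph V E" and pm: "perfect_matching V E M"
  shows "card E = card M + (\<Sum>P\<in>{P. P \<subseteq> M \<and> card P = 2}. card (induced E (Vs P) - M))"
proof -
  have "M \<subseteq> E" using pm by (simp add: perfect_matching_def)
  then have "card E = card M + card (E - M)"
    using simple_graph_finite_edges[OF sg] by (simp add: card_Diff_subset card_mono finite_subset)
  then show ?thesis using card_nonmatching_edges[OF sg pm] by simp
qed

lemma mult_self_eq_add_mult_minus_one: "n * n = n + n * (n - 1 :: nat)"
  by (cases n) simp_all

definition pairwise_alternating_square :: "'a set set \<Rightarrow> 'a set set \<Rightarrow> bool" where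
  "pairwise_alternating_square E M \<longleftrightarrow>
     (\<forall>ei\<in>M. \<forall>ej\<in>M. ei \<noteq> ej \<longrightarrow> (\<exists>cs. alt_cycle (induced E (Vs {ei, ej})) M cs \<and> length cs = 4 \<and>
        induced E (Vs {ei, ej}) = cycle_edges cs))"

lemma card_edges_ge_if_pairwise_alternating:
  assumes sg: "simple_graph V E" and pm: "perfect_matching V E M" and alt: "pairwise_alternating E M"
  shows "card M * card M \<le> card E"
proof -
  let ?pairs = "{P. P \<subseteq> M \<and> card P = 2}"
  have "2 \<le> card (induced E (Vs P) - M)" if "P \<subseteq> M" and "card P = 2" for P
  proof -
    from that obtain ei ej where P: "P = {ei, ej}" "ei \<in> M" "ej \<in> M" "ei \<noteq> ej"
      by (rule card_2_subsetE)
    then obtain cs where "alt_cycle (induced E (Vs {ei, ej})) M cs"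
      using alt unfolding pairwise_alternating_def by blast
    then obtain p q r s where "distinct [p, q, r, s]" "{ei, ej} = {{p, q}, {r, s}}"
      "{q, r} \<in> E - M" "{s, p} \<in> E - M" "cycle_edges cs = {{p, q}, {q, r}, {r, s}, {s, p}}"
      by (rule alt_cycle_in_matching_pair[OF sg pm P(2-4)])
    moreover have "Vs {ei, ej} = {p, q, r, s}" using \<open>{ei, ej} = _\<close> by (auto simp: Vs_def)
    ultimately have "{{q, r}, {s, p}} \<subseteq> induced E (Vs P) - M" "card {{q, r}, {s, p}} = 2"
      by (auto simp: P(1) induced_def doubleton_eq_iff)
    moreover have "finite (induced E (Vs P) - M)"
      using simple_graph_finite_edges[OF sg] by (simp add: induced_def)
    ultimately show ?thesis by (metis card_mono)
  qed
  then have "card ?pairs * 2 \<le> (\<Sum>P\<in>?pairs. card (induced E (Vs P) - M))"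
    using sum_bounded_below[of ?pairs "2 :: nat" "\<lambda>P. card (induced E (Vs P) - M)"] by simp
  then show ?thesis
    using card_edges_eq[OF sg pm] card_matching_pairs[OF perfect_matching_finite[OF sg pm]]
      mult_self_eq_add_mult_minus_one[of "card M"] by linarith
qed

lemma card_edges_le_if_pairwise_alternating_square:
  assumes sg: "simple_graph V E" and pm: "perfect_matching V E M"
    and square: "pairwise_alternating_square E M"
  shows "card E \<le> card M * card M"
proof -
  let ?pairs = "{P. P \<subseteq> M \<and> card P = 2}"
  have "card (induced E (Vs P) - M) \<le> 2" if "P \<subseteq> M" and "card P = 2" for P
  proof -
    from that obtain ei ej where P: "P = {ei, ej}" "ei \<in> M" "ej \<in> M" "ei \<noteq> ej"
      by (rule card_2_subsetE)
    then obtain cs where cs: "alt_cycle (induced E (Vs {ei, ej})) M cs"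
      and induced: "induced E (Vs {ei, ej}) = cycle_edges cs"
      using square unfolding pairwise_alternating_square_def by blast
    obtain p q r s where pair: "{ei, ej} = {{p, q}, {r, s}}"
      and cycle: "cycle_edges cs = {{p, q}, {q, r}, {r, s}, {s, p}}"
      by (rule alt_cycle_in_matching_pair[OF sg pm P(2-4) cs])
    have "{p, q} \<in> {ei, ej}" "{r, s} \<in> {ei, ej}" unfolding pair by simp_all
    then have "{p, q} \<in> M" "{r, s} \<in> M" using P(2,3) by auto
    then have "induced E (Vs P) - M \<subseteq> {{q, r}, {s, p}}"
      unfolding P(1) induced cycle by blast
    then have "card (induced E (Vs P) - M) \<le> card {{q, r}, {s, p}}" by (simp add: card_mono)
    also have "\<dots> \<le> 2" by (simp add: card_insert_if)
    finally show ?thesis .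
  qed
  then have "(\<Sum>P\<in>?pairs. card (induced E (Vs P) - M)) \<le> card ?pairs * 2"
    using sum_bounded_above[of ?pairs "\<lambda>P. card (induced E (Vs P) - M)" "2 :: nat"] by simp
  then show ?thesis
    using card_edges_eq[OF sg pm] card_matching_pairs[OF perfect_matching_finite[OF sg pm]]
      mult_self_eq_add_mult_minus_one[of "card M"] by linarith
qed

section \<open>Minimal graphs\<close>

lemma finite_perfect_matchings: "simple_graph V E \<Longrightarrow> finite {M. perfect_matching V E M}"
  using simple_graph_finite_edges by (auto simp: perfect_matching_def intro: finite_subset[of _ "Pow E"])

lemma forcing_number_le_max:
  assumes "simple_graph V E" and "perfect_matching V E M"
  shows "forcing_number V E M \<le> max_forcing_number V E"
  unfolding max_forcing_number_def using finite_perfect_matchings assms by (intro Max_ge) auto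

lemma max_forcing_number_attained:
  assumes "simple_graph V E" and "perfect_matching V E M"
  obtains M' where "perfect_matching V E M'" and "forcing_number V E M' = max_forcing_number V E"
proof -
  have "max_forcing_number V E \<in> forcing_number V E ` {M. perfect_matching V E M}"
    unfolding max_forcing_number_def using finite_perfect_matchings assms by (intro Max_in) auto
  then show ?thesis using that by auto
qed

lemma max_forcing_number_le:
  assumes "simple_graph V E" and "perfect_matching V E M"
    and "\<And>M'. perfect_matching V E M' \<Longrightarrow> forcing_number V E M' \<le> k"
  shows "max_forcing_number V E \<le> k"
  using max_forcing_number_attained[OF assms(1,2)] assms(3) by metis

lemma minimal_graph_if_pairwise_alternating_square:
  assumes sg: "simple_graph V E" and "card V = 2 * n" and pm: "perfect_matching V E M"
    and square: "pairwise_alternating_square E M"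
  shows "minimal_graph n V E"
proof -
  have card_pm: "card M' = n" if "perfect_matching V F M'" and "simple_graph V F" for F M'
    using card_perfect_matching[OF that(2,1)] \<open>card V = 2 * n\<close> by simp
  have fn_le: "forcing_number V F M' \<le> n - 1" if "perfect_matching V F M'" and "simple_graph V F" for F M'
    using forcing_number_le_card_minus_one[OF that(2,1)] card_pm[OF that] by simp
  have alt: "pairwise_alternating E M"
    using square unfolding pairwise_alternating_def pairwise_alternating_square_def by blast
  have "forcing_number V E M = n - 1"
    using forcing_number_eq_iff_pairwise_alternating[OF sg pm] alt card_pm[OF pm sg] by simp
  then have max: "max_forcing_number V E = n - 1"
    using forcing_number_le_max[OF sg pm] max_forcing_number_le[OF sg pm fn_le[OF _ sg]] by simp
  have "card E = n * n"
    using card_edges_le_if_pairwise_alternating_square[OF sg pm square]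
      card_edges_ge_if_pairwise_alternating[OF sg pm alt] card_pm[OF pm sg] by simp
  have "max_forcing_number V (E - {e}) \<le> n - 2"
    if "e \<in> E" and pm': "perfect_matching V (E - {e}) M'" for e M'
  proof (rule max_forcing_number_le[OF simple_graph_Diff[OF sg] pm'])
    fix M'' assume pm'': "perfect_matching V (E - {e}) M''"
    note sg' = simple_graph_Diff[OF sg, of "{e}"]
    have "card (E - {e}) < n * n"
      using card_Diff1_less[OF simple_graph_finite_edges[OF sg] \<open>e \<in> E\<close>] \<open>card E = n * n\<close> by simp
    then have "\<not> pairwise_alternating (E - {e}) M''"
      using card_edges_ge_if_pairwise_alternating[OF sg' pm''] card_pm[OF pm'' sg'] by auto
    then have "forcing_number V (E - {e}) M'' \<noteq> n - 1"
      using forcing_number_eq_iff_pairwise_alternating[OF sg' pm''] card_pm[OF pm'' sg'] by simp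
    then show "forcing_number V (E - {e}) M'' \<le> n - 2" using fn_le[OF pm'' sg'] by linarith
  qed
  then show ?thesis unfolding minimal_graph_def using max by blast
qed

lemma pairwise_alternating_Diff_edge:
  assumes sg: "simple_graph V E" and pm: "perfect_matching V E M"
    and alt: "pairwise_alternating E M" and "g \<in> E - M"
    and "ei \<in> M" and "ej \<in> M" and "g \<subseteq> Vs {ei, ej}"
    and cs: "alt_cycle (induced E (Vs {ei, ej})) M cs" and "g \<notin> cycle_edges cs"
  shows "pairwise_alternating (E - {g}) M"
  unfolding pairwise_alternating_def
proof (intro ballI impI)
  fix ek el assume "ek \<in> M" "el \<in> M" "ek \<noteq> el"
  show "\<exists>cs. alt_cycle (induced (E - {g}) (Vs {ek, el})) M cs"
  proof (cases "{ek, el} = {ei, ej}")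
    case True
    have "cycle_edges cs \<subseteq> induced (E - {g}) (Vs {ek, el})"
      using alt_cycle_edges_subset[OF cs] \<open>g \<notin> cycle_edges cs\<close> True by (auto simp: induced_def)
    then show ?thesis using alt_cycle_mono[OF cs] by blast
  next
    case False
    then have "\<not> g \<subseteq> Vs {ek, el}"
      using nonmatching_edge_matching_pair_unique[OF sg pm \<open>g \<in> E - M\<close> \<open>ei \<in> M\<close> \<open>ej \<in> M\<close> \<open>ek \<in> M\<close> \<open>el \<in> M\<close>]
        \<open>g \<subseteq> Vs {ei, ej}\<close> by blast
    then have "induced (E - {g}) (Vs {ek, el}) = induced E (Vs {ek, el})" by (auto simp: induced_def)
    then show ?thesis using alt \<open>ek \<in> M\<close> \<open>el \<in> M\<close> \<open>ek \<noteq> el\<close> unfolding pairwise_alternating_def by simp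
  qed
qed

lemma induced_eq_cycle_edges_if_edge_critical:
  assumes sg: "simple_graph V E" and pm: "perfect_matching V E M" and alt: "pairwise_alternating E M"
    and critical: "\<And>g. g \<in> E - M \<Longrightarrow> \<not> pairwise_alternating (E - {g}) M"
    and "ei \<in> M" and "ej \<in> M" and "ei \<noteq> ej" and cs: "alt_cycle (induced E (Vs {ei, ej})) M cs"
  shows "induced E (Vs {ei, ej}) = cycle_edges cs"
proof
  show "cycle_edges cs \<subseteq> induced E (Vs {ei, ej})" by (rule alt_cycle_edges_subset[OF cs])
  show "induced E (Vs {ei, ej}) \<subseteq> cycle_edges cs"
  proof
    fix g assume g: "g \<in> induced E (Vs {ei, ej})"
    obtain p q r s where "{ei, ej} = {{p, q}, {r, s}}"
      and cycle: "cycle_edges cs = {{p, q}, {q, r}, {r, s}, {s, p}}"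
      by (rule alt_cycle_in_matching_pair[OF sg pm assms(5-8)])
    then have pair_in_cycle: "{ei, ej} \<subseteq> cycle_edges cs" by simp
    show "g \<in> cycle_edges cs"
    proof (cases "g \<in> M")
      case True
      obtain x where "x \<in> g" using perfect_matching_edge(3)[OF sg pm True] by (auto simp: card_2_iff)
      then have "g \<in> {ei, ej}"
        using matching_edge_in_pair[OF sg pm True \<open>ei \<in> M\<close> \<open>ej \<in> M\<close>] g by (auto simp: induced_def)
      then show ?thesis using pair_in_cycle by blast
    next
      case False
      show ?thesis
      proof (rule ccontr)
        assume "g \<notin> cycle_edges cs"
        moreover have "g \<in> E - M" "g \<subseteq> Vs {ei, ej}" using g False by (auto simp: induced_def)
        ultimately have "pairwise_alternating (E - {g}) M"
          using pairwise_alternating_Diff_edge[OF sg pm alt _ \<open>ei \<in> M\<close> \<open>ej \<in> M\<close> _ cs] by blast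
        then show False using critical \<open>g \<in> E - M\<close> by blast
      qed
    qed
  qed
qed

lemma pairwise_alternating_square_if_minimal_graph:
  assumes sg: "simple_graph V E" and "card V = 2 * n" and "2 \<le> n"
    and pm0: "perfect_matching V E M0" and minimal: "minimal_graph n V E"
  obtains M where "perfect_matching V E M" and "pairwise_alternating_square E M"
proof -
  have max: "max_forcing_number V E = n - 1"
    and del: "\<And>e. e \<in> E \<Longrightarrow> (\<nexists>M. perfect_matching V (E - {e}) M) \<or> max_forcing_number V (E - {e}) \<le> n - 2"
    using minimal unfolding minimal_graph_def by blast+
  obtain M where pm: "perfect_matching V E M" and "forcing_number V E M = n - 1"
    using max_forcing_number_attained[OF sg pm0] max by metis
  moreover have card: "card M = n" using card_perfect_matching[OF sg pm] \<open>card V = 2 * n\<close> by simp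
  ultimately have alt: "pairwise_alternating E M"
    using forcing_number_eq_iff_pairwise_alternating[OF sg pm] by simp
  have critical: "\<not> pairwise_alternating (E - {g}) M" if "g \<in> E - M" for g
  proof
    assume "pairwise_alternating (E - {g}) M"
    moreover have pm': "perfect_matching V (E - {g}) M" using pm that perfect_matching_Diff_edge_iff by blast
    ultimately have "forcing_number V (E - {g}) M = n - 1"
      using forcing_number_eq_iff_pairwise_alternating[OF simple_graph_Diff[OF sg] pm'] card by simp
    moreover have "forcing_number V (E - {g}) M \<le> n - 2"
      using forcing_number_le_max[OF simple_graph_Diff[OF sg] pm'] del[of g] pm' that by fastforce
    ultimately show False using \<open>2 \<le> n\<close> by linarith
  qed
  have "pairwise_alternating_square E M"
    unfolding pairwise_alternating_square_def
  proof (intro ballI impI)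
    fix ei ej assume pair: "ei \<in> M" "ej \<in> M" "ei \<noteq> ej"
    then obtain cs where cs: "alt_cycle (induced E (Vs {ei, ej})) M cs"
      using alt unfolding pairwise_alternating_def by blast
    then show "\<exists>cs. alt_cycle (induced E (Vs {ei, ej})) M cs \<and> length cs = 4 \<and>
        induced E (Vs {ei, ej}) = cycle_edges cs"
      using alt_cycle_in_matching_pair_length(1)[OF sg pm pair cs]
        induced_eq_cycle_edges_if_edge_critical[OF sg pm alt critical pair cs] by blast
  qed
  then show ?thesis using that pm by blast
qed

theorem lemma2p2:
  fixes V :: "'a set" and E :: "'a set set" and n :: nat
  assumes "n \<ge> 2" and "in_G2n n V E"
  shows "(\<forall>M. perfect_matching V E M \<longrightarrow>
            (forcing_number V E M = n - 1 \<longleftrightarrow>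
             (\<forall>ei\<in>M. \<forall>ej\<in>M. ei \<noteq> ej \<longrightarrow>
                (\<exists>cs. alt_cycle (induced E (Vs {ei, ej})) M cs))))
       \<and> ((\<exists>M. perfect_matching V E M \<and> forcing_number V E M = n - 1) \<longleftrightarrow>
          (\<exists>M. perfect_matching V E M \<and>
             (\<forall>ei\<in>M. \<forall>ej\<in>M. ei \<noteq> ej \<longrightarrow>
                (\<exists>cs. alt_cycle (induced E (Vs {ei, ej})) M cs))))
       \<and> (minimal_graph n V E \<longleftrightarrow>
          (\<exists>M. perfect_matching V E M \<and>
             (\<forall>ei\<in>M. \<forall>ej\<in>M. ei \<noteq> ej \<longrightarrow>
                (\<exists>cs. alt_cycle (induced E (Vs {ei, ej})) M cs \<and> length cs = 4 \<and>
                      induced E (Vs {ei, ej}) = cycle_edges cs))))"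
proof -
  obtain M0 where sg: "simple_graph V E" and card: "card V = 2 * n" and pm0: "perfect_matching V E M0"
    using assms(2) unfolding in_G2n_def by blast
  have forcing: "\<forall>M. perfect_matching V E M \<longrightarrow>
      (forcing_number V E M = n - 1 \<longleftrightarrow> pairwise_alternating E M)"
    using forcing_number_eq_iff_pairwise_alternating[OF sg] card_perfect_matching[OF sg] card by simp
  then have exists: "(\<exists>M. perfect_matching V E M \<and> forcing_number V E M = n - 1) \<longleftrightarrow>
      (\<exists>M. perfect_matching V E M \<and> pairwise_alternating E M)"
    by blast
  have minimal: "minimal_graph n V E \<longleftrightarrow> (\<exists>M. perfect_matching V E M \<and> pairwise_alternating_square E M)"
    using pairwise_alternating_square_if_minimal_graph[OF sg card assms(1) pm0]
      minimal_graph_if_pairwise_alternating_square[OF sg card] by blast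
  show ?thesis
    using forcing exists minimal unfolding pairwise_alternating_def pairwise_alternating_square_def
    by argo
qed

end
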